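(* Assume (H1'), let $\phi$ be a sub-additive admissible policy, $r\in\mathbb N_+$, and $z^1,\dots,z^r$ (possibly identical) strong erasing words for $(G,\phi)$, with $m=\sum_{i=1}^r|z^i|/2$. Let $$\mathscr B^r(z^1,\dots,z^r)=\{V^0V^1\,V^0\circ\theta\,V^1\circ\theta\cdots V^0\circ\theta^{m-1}V^1\circ\theta^{m-1}=z^1z^2\cdots z^r\},\qquad \mathscr C^r_n=\mathscr A_n(\emptyset)\cap\theta^{-n}\mathscr B^r(z^1,\dots,z^r).$$ Then for every $Y\in\mathscr Y_2^r$ and every $n\ge1$, $\mathscr C^r_n\subset\mathscr A_{n+m}(Y)$ up to a $\mathbb P^0$-null set.
   Context: $G=(\mathcal V,\mathcal E)$ finite connected simple graph; $\mathcal S$ the set of lists of preferences (for each class a linear ordering of its neighbours); $\phi$ a policy with probability $\nu_\phi$ on $\mathcal S$; $\mathbb W=\{w\in\mathcal V^*:|w|_i|w|_j=0\text{ whenever } i,j\text{ adjacent}\}$, $\mathbb W_2$ its even-length words; admissible $\phi$: map $\odot_\phi$ with $w\odot_\phi(v,\sigma)=wv$ if no letter of $w$ is adjacent to $v$, else $w$ with one letter adjacent to $v$ (chosen by $\phi$) deleted; $Q_\phi(z_1\cdots z_k,\varsigma_1\cdots\varsigma_k)=(\cdots(\emptyset\odot_\phi(z_1,\varsigma_1))\cdots)\odot_\phi(z_k,\varsigma_k)$. Sub-additive: $|Q_\phi(z'z'',\varsigma'\varsigma'')|\le|Q_\phi(z',\varsigma')|+|Q_\phi(z'',\varsigma'')|$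 for all words with preferences in the support of $\nu_\phi$. Strong erasing word: $z$ of even length $2p$ such that $Q_\phi(ijz,\varsigma\varsigma')=\emptyset$ for all non-adjacent $i,j$ (possibly equal) and $Q_\phi(z_{2\ell+1}\cdots z_{2p},\varsigma'_{2\ell+1}\cdots\varsigma'_{2p})=\emptyset$ for $\ell=0,\dots,p-1$, for all preference words with letters in the support of $\nu_\phi$. (H1'): $(V_{2n},\Sigma_{2n},V_{2n+1},\Sigma_{2n+1})_{n\in\mathbb Z}$ stationary ergodic with $V_{2n}\sim\mu^0$, $V_{2n+1}\sim\mu^1$, $\Sigma_m\sim\nu_\phi$, $(\mu^0+\mu^1)/2$ of full support; canonical space $\Omega^0$ with law $\mathbb P^0$, shift $\theta$, and $0$-coordinate $(V^0,\Sigma^0,V^1,\Sigma^1)$. $U^{[Y]}_0=Y$, $U^{[Y]}_{n+1}=(U^{[Y]}_n\odot_\phi(V^0\circ\theta^n,\Sigma^0\circ\theta^n))\odot_\phi(V^1\circ\theta^n,\Sigma^1\circ\theta^n)$; $\mathscr A_n(Y)=\{U^{[Y]}_n=\emptyset\}$. $\mathscr Y_2^r$ is the set of $\mathbb W_2$-valued r.v.'s $Y$ with $|Y|\le2r$ a.s. *)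

theory Defs
  imports "HOL-Probability.Probability"
begin

definition simple_connected_graph :: "('v::finite \<Rightarrow> 'v \<Rightarrow> bool) \<Rightarrow> bool" where
  "simple_connected_graph E \<longleftrightarrow>
     (\<forall>i j. E i j \<longrightarrow> E j i) \<and> (\<forall>i. \<not> E i i) \<and> (\<forall>i j. E\<^sup>*\<^sup>* i j)"

text \<open>Lists of preferences: for each class i, a linear ordering (list without repetition)
 of the neighbours of i.\<close>
type_synonym 'v pref = "'v \<Rightarrow> 'v list"

definition prefs :: "('v \<Rightarrow> 'v \<Rightarrow> bool) \<Rightarrow> 'v pref set" where
  "prefs E = {\<sigma>. \<forall>i. distinct (\<sigma> i) \<and> set (\<sigma> i) = {j. E i j}}"

definition words_W :: "('v \<Rightarrow> 'v \<Rightarrow> bool) \<Rightarrow> 'v list set" where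
  "words_W E = {w. \<forall>i j. E i j \<longrightarrow> count_list w i * count_list w j = 0}"

definition words_W2 :: "('v \<Rightarrow> 'v \<Rightarrow> bool) \<Rightarrow> 'v list set" where
  "words_W2 E = {w \<in> words_W E. even (length w)}"

definition admissible ::
  "('v \<Rightarrow> 'v \<Rightarrow> bool) \<Rightarrow> ('v list \<Rightarrow> 'v \<Rightarrow> 'v pref \<Rightarrow> 'v list) \<Rightarrow> 'v pref set \<Rightarrow> bool" where
  "admissible E odot S \<longleftrightarrow>
     (\<forall>w \<in> words_W E. \<forall>v. \<forall>\<sigma> \<in> S.
        ((\<forall>x \<in> set w. \<not> E x v) \<longrightarrow> odot w v \<sigma> = w @ [v]) \<and>
        ((\<exists>x \<in> set w. E x v) \<longrightarrow>
           (\<exists>u1 x u2. w = u1 @ [x] @ u2 \<and> E x v \<and> odot w v \<sigma> = u1 @ u2)))"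

definition Q :: "('v list \<Rightarrow> 'v \<Rightarrow> 'v pref \<Rightarrow> 'v list) \<Rightarrow> 'v list \<Rightarrow> 'v pref list \<Rightarrow> 'v list" where
  "Q odot z s = foldl (\<lambda>w (v, \<sigma>). odot w v \<sigma>) [] (zip z s)"

definition sub_additive ::
  "('v list \<Rightarrow> 'v \<Rightarrow> 'v pref \<Rightarrow> 'v list) \<Rightarrow> 'v pref set \<Rightarrow> bool" where
  "sub_additive odot Supp \<longleftrightarrow>
     (\<forall>z1 z2 s1 s2. length s1 = length z1 \<longrightarrow> length s2 = length z2 \<longrightarrow>
        set s1 \<subseteq> Supp \<longrightarrow> set s2 \<subseteq> Supp \<longrightarrow>
        length (Q odot (z1 @ z2) (s1 @ s2)) \<le> length (Q odot z1 s1) + length (Q odot z2 s2))"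

definition strong_erasing ::
  "('v \<Rightarrow> 'v \<Rightarrow> bool) \<Rightarrow> ('v list \<Rightarrow> 'v \<Rightarrow> 'v pref \<Rightarrow> 'v list) \<Rightarrow> 'v pref set \<Rightarrow> 'v list \<Rightarrow> bool" where
  "strong_erasing E odot Supp z \<longleftrightarrow>
     even (length z) \<and>
     (\<forall>i j s s'. \<not> E i j \<longrightarrow> length s = 2 \<longrightarrow> length s' = length z \<longrightarrow>
        set s \<subseteq> Supp \<longrightarrow> set s' \<subseteq> Supp \<longrightarrow> Q odot ([i, j] @ z) (s @ s') = []) \<and>
     (\<forall>l < length z div 2. \<forall>s'. length s' = length z - 2 * l \<longrightarrow> set s' \<subseteq> Supp \<longrightarrow>
        Q odot (drop (2 * l) z) s' = [])"

type_synonym 'v omega = "int \<Rightarrow> ('v \<times> 'v pref \<times> 'v \<times> 'v pref)"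

definition canon_sets :: "'v omega measure" where
  "canon_sets = PiM UNIV (\<lambda>_. count_space UNIV)"

definition shift :: "nat \<Rightarrow> 'v omega \<Rightarrow> 'v omega" where
  "shift n \<omega> = (\<lambda>k. \<omega> (k + int n))"

definition V0 :: "'v omega \<Rightarrow> 'v" where "V0 \<omega> = fst (\<omega> 0)"
definition S0 :: "'v omega \<Rightarrow> 'v pref" where "S0 \<omega> = fst (snd (\<omega> 0))"
definition V1 :: "'v omega \<Rightarrow> 'v" where "V1 \<omega> = fst (snd (snd (\<omega> 0)))"
definition S1 :: "'v omega \<Rightarrow> 'v pref" where "S1 \<omega> = snd (snd (snd (\<omega> 0)))"

definition H1' :: "'v omega measure \<Rightarrow> 'v pmf \<Rightarrow> 'v pmf \<Rightarrow> 'v pref pmf \<Rightarrow> bool" where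
  "H1' P \<mu>0 \<mu>1 \<nu> \<longleftrightarrow>
     prob_space P \<and> space P = UNIV \<and> sets P = sets canon_sets \<and>
     shift 1 \<in> measurable P P \<and> distr P P (shift 1) = P \<and>
     (\<forall>A \<in> sets P. shift 1 -` A = A \<longrightarrow> measure P A = 0 \<or> measure P A = 1) \<and>
     distr P (count_space UNIV) V0 = measure_pmf \<mu>0 \<and>
     distr P (count_space UNIV) V1 = measure_pmf \<mu>1 \<and>
     distr P (count_space UNIV) S0 = measure_pmf \<nu> \<and>
     distr P (count_space UNIV) S1 = measure_pmf \<nu> \<and>
     (\<forall>v. (pmf \<mu>0 v + pmf \<mu>1 v) / 2 > 0)"

fun U :: "('v list \<Rightarrow> 'v \<Rightarrow> 'v pref \<Rightarrow> 'v list) \<Rightarrow> ('v omega \<Rightarrow> 'v list) \<Rightarrow> nat \<Rightarrow> 'v omega \<Rightarrow> 'v list" where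
  "U odot Y 0 \<omega> = Y \<omega>"
| "U odot Y (Suc n) \<omega> =
     odot (odot (U odot Y n \<omega>) (V0 (shift n \<omega>)) (S0 (shift n \<omega>))) (V1 (shift n \<omega>)) (S1 (shift n \<omega>))"

definition event_A :: "('v list \<Rightarrow> 'v \<Rightarrow> 'v pref \<Rightarrow> 'v list) \<Rightarrow> nat \<Rightarrow> ('v omega \<Rightarrow> 'v list) \<Rightarrow> 'v omega set" where
  "event_A odot n Y = {\<omega>. U odot Y n \<omega> = []}"

definition arrivals :: "nat \<Rightarrow> 'v omega \<Rightarrow> 'v list" where
  "arrivals k \<omega> = concat (map (\<lambda>i. [V0 (shift i \<omega>), V1 (shift i \<omega>)]) [0..<k])"

definition event_B :: "'v list list \<Rightarrow> 'v omega set" where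
  "event_B zs = {\<omega>. arrivals (sum_list (map length zs) div 2) \<omega> = concat zs}"

definition event_C :: "('v list \<Rightarrow> 'v \<Rightarrow> 'v pref \<Rightarrow> 'v list) \<Rightarrow> 'v list list \<Rightarrow> nat \<Rightarrow> 'v omega set" where
  "event_C odot zs n = event_A odot n (\<lambda>_. []) \<inter> shift n -` event_B zs"

definition rvs_Y2 :: "('v \<Rightarrow> 'v \<Rightarrow> bool) \<Rightarrow> 'v omega measure \<Rightarrow> nat \<Rightarrow> ('v omega \<Rightarrow> 'v list) set" where
  "rvs_Y2 E P r = {Y. Y \<in> measurable P (count_space UNIV) \<and> (\<forall>\<omega>. Y \<omega> \<in> words_W2 E) \<and>
                      (AE \<omega> in P. length (Y \<omega>) \<le> 2 * r)}"

end

theory Submission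
  imports Defs
begin

text \<open>On C_n the system started from the empty word is empty at time n, so by
  sub-additivity the system started from Y has length at most |Y| \<le> 2r at time n; it is
  moreover an even word of W, since every arrival flips the parity. A word w1 i j of W
  is reproduced by the dynamics, so by sub-additivity feeding it a strong erasing word
  z leaves a word of length at most |w1| + |Q(i j z)| = |w1|. Hence each of the r blocks
  z^1, ..., z^r read on \<theta>^-n B removes two letters, and the word is empty at time n + m.\<close>

lemma words_W_iff: "w \<in> words_W E \<longleftrightarrow> (\<forall>i j. E i j \<longrightarrow> i \<notin> set w \<or> j \<notin> set w)"
  unfolding words_W_def by (auto simp: count_list_0_iff)

definition run ::
  "('v list \<Rightarrow> 'v \<Rightarrow> 'v pref \<Rightarrow> 'v list) \<Rightarrow> 'v list \<Rightarrow> 'v list \<Rightarrow> 'v pref list \<Rightarrow> 'v list" where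
  "run odot w z s = foldl (\<lambda>w (v, \<sigma>). odot w v \<sigma>) w (zip z s)"

lemma Q_eq_run: "Q odot z s = run odot [] z s"
  unfolding Q_def run_def ..

lemma run_Nil [simp]: "run odot w [] s = w"
  unfolding run_def by simp

lemma run_Cons [simp]: "run odot w (v # z) (\<sigma> # s) = run odot (odot w v \<sigma>) z s"
  unfolding run_def by simp

lemma run_append:
  "length z1 = length s1 \<Longrightarrow> run odot w (z1 @ z2) (s1 @ s2) = run odot (run odot w z1 s1) z2 s2"
  unfolding run_def by simp

lemma admissible_step:
  assumes adm: "admissible E odot S" and w: "w \<in> words_W E" and \<sigma>: "\<sigma> \<in> S"
    and sym: "\<forall>i j. E i j \<longrightarrow> E j i" and irr: "\<forall>i. \<not> E i i"
  shows "odot w v \<sigma> \<in> words_W E \<and> (even (length (odot w v \<sigma>)) \<longleftrightarrow> odd (length w))"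
proof (cases "\<exists>x \<in> set w. E x v")
  case True
  then obtain u1 x u2 where "w = u1 @ [x] @ u2" "odot w v \<sigma> = u1 @ u2"
    using adm w \<sigma> unfolding admissible_def by blast
  then show ?thesis using w unfolding words_W_iff by auto
next
  case False
  then have "odot w v \<sigma> = w @ [v]" using adm w \<sigma> unfolding admissible_def by blast
  then show ?thesis using w False sym irr unfolding words_W_iff by auto
qed

lemma run_words_W:
  assumes adm: "admissible E odot S"
    and sym: "\<forall>i j. E i j \<longrightarrow> E j i" and irr: "\<forall>i. \<not> E i i"
  shows "w \<in> words_W E \<Longrightarrow> set s \<subseteq> S \<Longrightarrow> length s = length z \<Longrightarrow>
    run odot w z s \<in> words_W E \<and> (even (length (run odot w z s)) \<longleftrightarrow> even (length w + length z))"
proof (induction z arbitrary: w s)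
  case (Cons v z)
  then obtain \<sigma> s' where s: "s = \<sigma> # s'" by (cases s) auto
  then show ?case
    using admissible_step[OF adm Cons.prems(1) _ sym irr, of \<sigma> v] Cons.IH[of "odot w v \<sigma>" s'] Cons.prems
    by auto
qed simp

text \<open>No letter of u is adjacent to a letter of w, so every arrival is simply appended.\<close>
lemma run_append_words_W:
  assumes adm: "admissible E odot S"
  shows "w @ u \<in> words_W E \<Longrightarrow> set s \<subseteq> S \<Longrightarrow> length s = length u \<Longrightarrow> run odot w u s = w @ u"
proof (induction u arbitrary: w s)
  case (Cons v u)
  then obtain \<sigma> s' where s: "s = \<sigma> # s'" by (cases s) auto
  have "w \<in> words_W E" "\<forall>x \<in> set w. \<not> E x v"
    using Cons.prems(1) unfolding words_W_iff by auto
  then have "odot w v \<sigma> = w @ [v]" using adm s Cons.prems(2) unfolding admissible_def by auto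
  then show ?case using Cons.IH[of "w @ [v]" s'] Cons.prems s by simp
qed simp

lemma run_length_le_sub_additive:
  assumes adm: "admissible E odot S" and subadd: "sub_additive odot S" and "S \<noteq> {}"
    and w: "w \<in> words_W E" and s: "set s \<subseteq> S" "length s = length z"
  shows "length (run odot w z s) \<le> length w + length (Q odot z s)"
proof -
  obtain \<sigma>0 where \<sigma>0: "\<sigma>0 \<in> S" using \<open>S \<noteq> {}\<close> by blast
  define sw where "sw = replicate (length w) \<sigma>0"
  have sw: "set sw \<subseteq> S" "length sw = length w" using \<sigma>0 unfolding sw_def by auto
  have Qw: "Q odot w sw = w"
    using run_append_words_W[OF adm, of "[]" w sw] w sw unfolding Q_eq_run by simp
  have "run odot w z s = Q odot (w @ z) (sw @ s)"
    using run_append[OF sw(2)[symmetric], of odot "[]" z s] Qw unfolding Q_eq_run by simp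
  then show ?thesis
    using subadd sw s Qw unfolding sub_additive_def by (metis (no_types, lifting))
qed

lemma strong_erasing_run_length:
  assumes adm: "admissible E odot S" and subadd: "sub_additive odot S" and "S \<noteq> {}"
    and z: "strong_erasing E odot S z"
    and w: "w \<in> words_W E" "even (length w)" and s: "set s \<subseteq> S" "length s = length z"
  shows "length (run odot w z s) \<le> length w - 2"
proof (cases "w = []")
  case True
  have "Q odot z s = []"
  proof (cases "z = []")
    case False
    with z have "0 < length z div 2" unfolding strong_erasing_def by (cases z) auto
    with z s show ?thesis unfolding strong_erasing_def by force
  qed (simp add: Q_def)
  then show ?thesis using True by (simp add: Q_eq_run)
next
  case False
  with w(2) obtain w1 i j where w1: "w = w1 @ [i, j]"
    by (cases w rule: rev_cases; cases "butlast w" rule: rev_cases) auto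
  obtain \<sigma>0 where \<sigma>0: "\<sigma>0 \<in> S" using \<open>S \<noteq> {}\<close> by blast
  have "w1 \<in> words_W E" "\<not> E i j" using w(1) unfolding w1 words_W_iff by auto
  have "run odot w z s = run odot w1 ([i, j] @ z) ([\<sigma>0, \<sigma>0] @ s)"
    using run_append_words_W[OF adm, of w1 "[i, j]" "[\<sigma>0, \<sigma>0]"] w(1) \<sigma>0
    by (simp add: w1 run_append)
  moreover have "Q odot ([i, j] @ z) ([\<sigma>0, \<sigma>0] @ s) = []"
  proof -
    have "\<forall>s s'. length s = 2 \<longrightarrow> length s' = length z \<longrightarrow> set s \<subseteq> S \<longrightarrow> set s' \<subseteq> S \<longrightarrow>
        Q odot ([i, j] @ z) (s @ s') = []"
      using z \<open>\<not> E i j\<close> unfolding strong_erasing_def by blast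
    from this[rule_format, of "[\<sigma>0, \<sigma>0]" s] show ?thesis using s \<sigma>0 by simp
  qed
  ultimately show ?thesis
    using run_length_le_sub_additive[OF adm subadd \<open>S \<noteq> {}\<close> \<open>w1 \<in> words_W E\<close>,
        of "[\<sigma>0, \<sigma>0] @ s" "[i, j] @ z"] s \<sigma>0
    by (simp add: w1)
qed

lemma run_concat_strong_erasing:
  assumes adm: "admissible E odot S"
    and sym: "\<forall>i j. E i j \<longrightarrow> E j i" and irr: "\<forall>i. \<not> E i i"
    and subadd: "sub_additive odot S" and "S \<noteq> {}"
    and zs: "\<forall>z \<in> set zs. strong_erasing E odot S z"
  shows "w \<in> words_W E \<Longrightarrow> even (length w) \<Longrightarrow> length w \<le> 2 * length zs \<Longrightarrow>
    set s \<subseteq> S \<Longrightarrow> length s = length (concat zs) \<Longrightarrow> run odot w (concat zs) s = []"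
  using zs
proof (induction zs arbitrary: w s)
  case (Cons z zs)
  define s1 where "s1 = take (length z) s"
  define s2 where "s2 = drop (length z) s"
  have s: "s = s1 @ s2" "length s1 = length z" "length s2 = length (concat zs)"
    "set s1 \<subseteq> S" "set s2 \<subseteq> S"
    using Cons.prems unfolding s1_def s2_def by (auto dest: in_set_takeD in_set_dropD)
  have z: "strong_erasing E odot S z" using Cons.prems by simp
  have "even (length z)" using z unfolding strong_erasing_def by simp
  then have "run odot w z s1 \<in> words_W E" "even (length (run odot w z s1))"
    using run_words_W[OF adm sym irr Cons.prems(1) s(4,2)] Cons.prems(2) by auto
  moreover have "length (run odot w z s1) \<le> 2 * length zs"
    using strong_erasing_run_length[OF adm subadd \<open>S \<noteq> {}\<close> z Cons.prems(1,2) s(4,2)]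
      Cons.prems(3) by simp
  ultimately show ?case
    using Cons.IH[of "run odot w z s1" s2] Cons.prems s by (simp add: run_append)
qed simp

lemma shift_shift: "shift i (shift n \<omega>) = shift (n + i) \<omega>"
  unfolding shift_def by (auto simp: algebra_simps)

lemma shift_0: "shift 0 \<omega> = \<omega>"
  unfolding shift_def by simp

definition pref_arrivals :: "nat \<Rightarrow> 'v omega \<Rightarrow> 'v pref list" where
  "pref_arrivals k \<omega> = concat (map (\<lambda>i. [S0 (shift i \<omega>), S1 (shift i \<omega>)]) [0..<k])"

lemma length_arrivals: "length (arrivals k \<omega>) = 2 * k"
  unfolding arrivals_def by (induction k) auto

lemma length_pref_arrivals: "length (pref_arrivals k \<omega>) = 2 * k"
  unfolding pref_arrivals_def by (induction k) auto

lemma U_add: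
  "U odot Y (n + m) \<omega> = run odot (U odot Y n \<omega>) (arrivals m (shift n \<omega>)) (pref_arrivals m (shift n \<omega>))"
proof (induction m)
  case 0
  then show ?case by (simp add: arrivals_def pref_arrivals_def)
next
  case (Suc m)
  have "arrivals (Suc m) (shift n \<omega>) =
      arrivals m (shift n \<omega>) @ [V0 (shift (n + m) \<omega>), V1 (shift (n + m) \<omega>)]"
    "pref_arrivals (Suc m) (shift n \<omega>) =
      pref_arrivals m (shift n \<omega>) @ [S0 (shift (n + m) \<omega>), S1 (shift (n + m) \<omega>)]"
    unfolding arrivals_def pref_arrivals_def by (simp_all add: shift_shift)
  then show ?case
    using Suc.IH by (simp add: run_append length_arrivals length_pref_arrivals)
qed

lemma H1'_shift_preserving:
  fixes P :: "'v omega measure"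
  assumes H1: "H1' P \<mu>0 \<mu>1 \<nu>"
  shows "shift k \<in> measurable P P \<and> distr P P (shift k) = P"
proof (induction k)
  case 0
  have "shift 0 = (\<lambda>\<omega>::'v omega. \<omega>)" by (rule ext) (simp add: shift_0)
  then show ?case by simp
next
  case (Suc k)
  have m1: "shift 1 \<in> measurable P P" and d1: "distr P P (shift 1) = P"
    using H1 unfolding H1'_def by auto
  have e: "shift (Suc k) = shift 1 \<circ> shift k" by (rule ext) (simp add: shift_shift)
  have "shift (Suc k) \<in> measurable P P" unfolding e using Suc m1 by (auto intro: measurable_comp)
  moreover have "distr P P (shift (Suc k)) = P"
    unfolding e using Suc m1 d1 distr_distr[of "shift 1" P P "shift k" P] by simp
  ultimately show ?case ..
qed

lemma H1'_coordinate_measurable: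
  fixes P :: "'v omega measure"
  assumes H1: "H1' P \<mu>0 \<mu>1 \<nu>"
  shows "(\<lambda>\<omega>::'v omega. g (\<omega> 0)) \<in> measurable P (count_space UNIV)"
proof -
  have "(\<lambda>\<omega>::'v omega. \<omega> 0) \<in> measurable canon_sets (count_space UNIV)"
    unfolding canon_sets_def by (rule measurable_component_singleton) simp
  then have "(\<lambda>\<omega>::'v omega. g (\<omega> 0)) \<in> measurable canon_sets (count_space UNIV)"
    by (rule measurable_compose) simp
  moreover have "sets P = sets canon_sets" using H1 unfolding H1'_def by auto
  ultimately show ?thesis by (simp add: measurable_cong_sets)
qed

lemma H1'_AE_shift_in_set_pmf:
  fixes P :: "'v omega measure"
  assumes H1: "H1' P \<mu>0 \<mu>1 \<nu>" and f: "f \<in> measurable P (count_space UNIV)"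
    and distr_f: "distr P (count_space UNIV) f = measure_pmf p"
  shows "AE \<omega> in P. f (shift k \<omega>) \<in> set_pmf p"
proof -
  have sk: "shift k \<in> measurable P P" "distr P P (shift k) = P"
    using H1'_shift_preserving[OF H1] by auto
  have "AE x in distr (distr P P (shift k)) (count_space UNIV) f. x \<in> set_pmf p"
    unfolding sk(2) distr_f by (rule AE_measure_pmf)
  then have "AE x in distr P (count_space UNIV) (f \<circ> shift k). x \<in> set_pmf p"
    using distr_distr[OF f sk(1)] by argo
  then show ?thesis
    using AE_distr_iff[OF measurable_comp[OF sk(1) f], of "\<lambda>x. x \<in> set_pmf p"] by simp
qed

lemma H1'_AE_prefs_in_support:
  fixes P :: "'v omega measure"
  assumes H1: "H1' P \<mu>0 \<mu>1 \<nu>"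
  shows "AE \<omega> in P. \<forall>k. S0 (shift k \<omega>) \<in> set_pmf \<nu> \<and> S1 (shift k \<omega>) \<in> set_pmf \<nu>"
proof -
  have m: "S0 \<in> measurable P (count_space UNIV)" "S1 \<in> measurable P (count_space UNIV)"
    using H1'_coordinate_measurable[OF H1, of "\<lambda>x. fst (snd x)"]
      H1'_coordinate_measurable[OF H1, of "\<lambda>x. snd (snd (snd x))"]
    unfolding S0_def S1_def by simp_all
  have d: "distr P (count_space UNIV) S0 = measure_pmf \<nu>"
    "distr P (count_space UNIV) S1 = measure_pmf \<nu>"
    using H1 unfolding H1'_def by auto
  have "AE \<omega> in P. S0 (shift k \<omega>) \<in> set_pmf \<nu> \<and> S1 (shift k \<omega>) \<in> set_pmf \<nu>" for k
    using H1'_AE_shift_in_set_pmf[OF H1 m(1) d(1), of k] H1'_AE_shift_in_set_pmf[OF H1 m(2) d(2), of k]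
    by eventually_elim simp
  then show ?thesis by (simp add: AE_all_countable)
qed

lemma set_pref_arrivals_subset:
  "\<forall>k. S0 (shift k \<omega>) \<in> S \<and> S1 (shift k \<omega>) \<in> S \<Longrightarrow> set (pref_arrivals m (shift n \<omega>)) \<subseteq> S"
  unfolding pref_arrivals_def by (auto simp: shift_shift)

lemma U_vanishes_after_strong_erasing_words:
  assumes adm: "admissible E odot S"
    and sym: "\<forall>i j. E i j \<longrightarrow> E j i" and irr: "\<forall>i. \<not> E i i"
    and subadd: "sub_additive odot S" and "S \<noteq> {}"
    and zs: "\<forall>z \<in> set zs. strong_erasing E odot S z"
    and prefs: "\<forall>k. S0 (shift k \<omega>) \<in> S \<and> S1 (shift k \<omega>) \<in> S"
    and Y: "Y \<omega> \<in> words_W E" "even (length (Y \<omega>))" "length (Y \<omega>) \<le> 2 * length zs"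
    and empty: "U odot (\<lambda>_. []) n \<omega> = []"
    and B: "arrivals m (shift n \<omega>) = concat zs"
  shows "U odot Y (n + m) \<omega> = []"
proof -
  let ?ps = "pref_arrivals n \<omega>" and ?Un = "U odot Y n \<omega>"
  have ps: "set ?ps \<subseteq> S" "length ?ps = length (arrivals n \<omega>)"
    using set_pref_arrivals_subset[OF prefs, of n 0]
    by (simp_all add: shift_0 length_arrivals length_pref_arrivals)
  have Un: "?Un = run odot (Y \<omega>) (arrivals n \<omega>) ?ps"
    "U odot (\<lambda>_. []) n \<omega> = Q odot (arrivals n \<omega>) ?ps"
    using U_add[of odot _ 0 n \<omega>] by (simp_all add: shift_0 Q_eq_run)
  have "?Un \<in> words_W E" "even (length ?Un)"
    using run_words_W[OF adm sym irr Y(1) ps] Y(2) by (auto simp: Un length_arrivals)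
  moreover have "length ?Un \<le> 2 * length zs"
    using run_length_le_sub_additive[OF adm subadd \<open>S \<noteq> {}\<close> Y(1) ps] empty Y(3)
    by (simp add: Un)
  moreover have "set (pref_arrivals m (shift n \<omega>)) \<subseteq> S"
    "length (pref_arrivals m (shift n \<omega>)) = length (concat zs)"
    using set_pref_arrivals_subset[OF prefs] B length_arrivals[of m "shift n \<omega>"]
    by (simp_all add: length_pref_arrivals)
  ultimately show ?thesis
    using run_concat_strong_erasing[OF adm sym irr subadd \<open>S \<noteq> {}\<close> zs] B
    unfolding U_add by simp
qed

theorem mainTheorem13:
  fixes E :: "'v::finite \<Rightarrow> 'v \<Rightarrow> bool"
    and odot :: "'v list \<Rightarrow> 'v \<Rightarrow> 'v pref \<Rightarrow> 'v list"
    and \<nu> :: "'v pref pmf" and \<mu>0 \<mu>1 :: "'v pmf"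
    and P :: "'v omega measure"
    and r :: nat and zs :: "'v list list"
  assumes G: "simple_connected_graph E"
    and nu_S: "set_pmf \<nu> \<subseteq> prefs E"
    and adm: "admissible E odot (set_pmf \<nu>)"
    and subadd: "sub_additive odot (set_pmf \<nu>)"
    and H1: "H1' P \<mu>0 \<mu>1 \<nu>"
    and r_pos: "r \<ge> 1"
    and zs_len: "length zs = r"
    and zs_se: "\<forall>z \<in> set zs. strong_erasing E odot (set_pmf \<nu>) z"
  shows "\<forall>Y \<in> rvs_Y2 E P r. \<forall>n \<ge> 1.
           AE \<omega> in P. \<omega> \<in> event_C odot zs n \<longrightarrow>
             \<omega> \<in> event_A odot (n + sum_list (map length zs) div 2) Y"
proof (intro ballI allI impI)
  fix Y and n :: nat assume Y: "Y \<in> rvs_Y2 E P r"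
  have sym: "\<forall>i j. E i j \<longrightarrow> E j i" and irr: "\<forall>i. \<not> E i i"
    using G unfolding simple_connected_graph_def by blast+
  have YW: "\<forall>\<omega>. Y \<omega> \<in> words_W E \<and> even (length (Y \<omega>))"
    using Y unfolding rvs_Y2_def words_W2_def by auto
  have "AE \<omega> in P. length (Y \<omega>) \<le> 2 * r" using Y unfolding rvs_Y2_def by auto
  with H1'_AE_prefs_in_support[OF H1]
  show "AE \<omega> in P. \<omega> \<in> event_C odot zs n \<longrightarrow>
      \<omega> \<in> event_A odot (n + sum_list (map length zs) div 2) Y"
  proof eventually_elim
    case (elim \<omega>)
    show ?case
      using U_vanishes_after_strong_erasing_words[OF adm sym irr subadd set_pmf_not_empty zs_se elim(1)]
        YW elim(2) zs_len
      unfolding event_C_def event_A_def event_B_def by auto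
  qed
qed

end
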